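(* Let $Q$ be an admissible orientation of $\tilde A_n$ and let $I$ be a non-zero linearized semigroup ideal of $\Bbbk Q$. Then $I$ is indecomposable (as an ideal, i.e. it is not a direct sum of two non-zero ideals) if and only if the graph $\Gamma_I$ is connected.
   Context: $\Bbbk$ is an algebraically closed field. An admissible orientation of $\tilde A_n$ is a finite quiver $Q$ with $n$ vertices whose underlying undirected graph is a cycle, having no oriented cycle and at least one source; let $k\ge1$ be the number of sources (= number of sinks). Paths include trivial paths $\varepsilon_x$; products of paths in $\Bbbk Q$ are concatenations when defined and $0$ otherwise. $\omega\le_J\upsilon$ means $\upsilon=\alpha\omega\beta$ for paths $\alpha,\beta$; maximal paths are the $\le_J$-maximal paths (they are the $2k$ paths from a source to an adjacent sink). A linearized semigroup ideal is an ideal spanned by a set $X$ of paths such that $\alpha\omega\beta\in X$ whenever $\omega\in X$ and $\alpha\omega\beta$ is a defined path. The graph $\Gamma$ has the maximal paths as vertices and the sources and sinks of $Q$ as edges, the edge $x$ joining the two maximal paths having $x$ as an endpoint. For a linearized semigroup ideal $I$, $\Gamma_I$ is the subgraph with vertex set the maximal paths lying in $I$ and edge set the sources/sinks $x$ with $\varepsilon_x\in I$. *)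

theory Defs
  imports "HOL-Computational_Algebra.Polynomial"
begin

text \<open>Vertices are 0..n-1; arrow i (for i < n) joins vertex i and vertex (i+1) mod n.  Every quiver whose underlying graph is a cycle with
  n vertices is isomorphic to one of these.\<close>

definition arr_src :: "nat \<Rightarrow> (nat \<Rightarrow> bool) \<Rightarrow> nat \<Rightarrow> nat" where
  "arr_src n dir i = (if dir i then i else Suc i mod n)"

definition arr_tgt :: "nat \<Rightarrow> (nat \<Rightarrow> bool) \<Rightarrow> nat \<Rightarrow> nat" where
  "arr_tgt n dir i = (if dir i then Suc i mod n else i)"

text \<open>A path is a pair (start vertex, list of arrows); (x, []) is the trivial path at x.\<close>
type_synonym qpath = "nat \<times> nat list"

fun pvalid :: "nat \<Rightarrow> (nat \<Rightarrow> bool) \<Rightarrow> nat \<Rightarrow> nat list \<Rightarrow> bool" where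
  "pvalid n dir x [] = (x < n)"
| "pvalid n dir x (a # as) = (a < n \<and> x = arr_src n dir a \<and> pvalid n dir (arr_tgt n dir a) as)"

fun pend :: "nat \<Rightarrow> (nat \<Rightarrow> bool) \<Rightarrow> nat \<Rightarrow> nat list \<Rightarrow> nat" where
  "pend n dir x [] = x"
| "pend n dir x (a # as) = pend n dir (arr_tgt n dir a) as"

definition is_path :: "nat \<Rightarrow> (nat \<Rightarrow> bool) \<Rightarrow> qpath \<Rightarrow> bool" where
  "is_path n dir p = pvalid n dir (fst p) (snd p)"

definition path_start :: "qpath \<Rightarrow> nat" where
  "path_start p = fst p"

definition path_end :: "nat \<Rightarrow> (nat \<Rightarrow> bool) \<Rightarrow> qpath \<Rightarrow> nat" where
  "path_end n dir p = pend n dir (fst p) (snd p)"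

definition composable :: "nat \<Rightarrow> (nat \<Rightarrow> bool) \<Rightarrow> qpath \<Rightarrow> qpath \<Rightarrow> bool" where
  "composable n dir p q = (path_end n dir p = path_start q)"

definition pconcat :: "qpath \<Rightarrow> qpath \<Rightarrow> qpath" where
  "pconcat p q = (fst p, snd p @ snd q)"

definition is_source :: "nat \<Rightarrow> (nat \<Rightarrow> bool) \<Rightarrow> nat \<Rightarrow> bool" where
  "is_source n dir x = (x < n \<and> (\<forall>i<n. arr_tgt n dir i \<noteq> x))"

definition is_sink :: "nat \<Rightarrow> (nat \<Rightarrow> bool) \<Rightarrow> nat \<Rightarrow> bool" where
  "is_sink n dir x = (x < n \<and> (\<forall>i<n. arr_src n dir i \<noteq> x))"

definition admissible :: "nat \<Rightarrow> (nat \<Rightarrow> bool) \<Rightarrow> bool" where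
  "admissible n dir =
     ((\<forall>p. is_path n dir p \<and> snd p \<noteq> [] \<longrightarrow> path_end n dir p \<noteq> path_start p)
      \<and> (\<exists>x. is_source n dir x))"

definition le_J :: "nat \<Rightarrow> (nat \<Rightarrow> bool) \<Rightarrow> qpath \<Rightarrow> qpath \<Rightarrow> bool" where
  "le_J n dir w u = (\<exists>\<alpha> \<beta>. is_path n dir \<alpha> \<and> is_path n dir \<beta> \<and>
      composable n dir \<alpha> w \<and> composable n dir w \<beta> \<and> u = pconcat (pconcat \<alpha> w) \<beta>)"

definition maximal_path :: "nat \<Rightarrow> (nat \<Rightarrow> bool) \<Rightarrow> qpath \<Rightarrow> bool" where
  "maximal_path n dir w = (is_path n dir w \<and>
      (\<forall>u. is_path n dir u \<and> le_J n dir w u \<longrightarrow> u = w))"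

text \<open>Elements of kQ: k-linear combinations of paths, i.e. coefficient functions
  supported on paths (the set of paths is finite for acyclic Q).\<close>
definition pathalg :: "nat \<Rightarrow> (nat \<Rightarrow> bool) \<Rightarrow> (qpath \<Rightarrow> 'k::field) set" where
  "pathalg n dir = {f. \<forall>p. f p \<noteq> 0 \<longrightarrow> is_path n dir p}"

definition pmult :: "nat \<Rightarrow> (nat \<Rightarrow> bool) \<Rightarrow> (qpath \<Rightarrow> 'k::field) \<Rightarrow> (qpath \<Rightarrow> 'k) \<Rightarrow> (qpath \<Rightarrow> 'k)" where
  "pmult n dir f g = (\<lambda>r. \<Sum>(p, q) \<in> {(p, q). is_path n dir p \<and> is_path n dir q \<and>
       composable n dir p q \<and> pconcat p q = r}. f p * g q)"

definition path_elem :: "qpath \<Rightarrow> (qpath \<Rightarrow> 'k::field)" where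
  "path_elem w = (\<lambda>r. if r = w then 1 else 0)"

definition is_ideal :: "nat \<Rightarrow> (nat \<Rightarrow> bool) \<Rightarrow> (qpath \<Rightarrow> 'k::field) set \<Rightarrow> bool" where
  "is_ideal n dir I = (I \<subseteq> pathalg n dir \<and> (\<lambda>_. 0) \<in> I \<and>
      (\<forall>f\<in>I. \<forall>g\<in>I. (\<lambda>r. f r + g r) \<in> I) \<and>
      (\<forall>c. \<forall>f\<in>I. (\<lambda>r. c * f r) \<in> I) \<and>
      (\<forall>f\<in>I. \<forall>a\<in>pathalg n dir. pmult n dir a f \<in> I \<and> pmult n dir f a \<in> I))"

text \<open>Linearized semigroup ideal: the span of a set X of paths closed under
  alpha omega beta; the span of X is the set of elements supported on X.\<close>
definition lin_semigroup_ideal :: "nat \<Rightarrow> (nat \<Rightarrow> bool) \<Rightarrow> (qpath \<Rightarrow> 'k::field) set \<Rightarrow> bool" where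
  "lin_semigroup_ideal n dir I = (\<exists>X. X \<subseteq> {p. is_path n dir p} \<and>
      (\<forall>w\<in>X. \<forall>\<alpha> \<beta>. is_path n dir \<alpha> \<and> is_path n dir \<beta> \<and> composable n dir \<alpha> w \<and>
          composable n dir w \<beta> \<longrightarrow> pconcat (pconcat \<alpha> w) \<beta> \<in> X) \<and>
      I = {f \<in> pathalg n dir. \<forall>p. f p \<noteq> 0 \<longrightarrow> p \<in> X})"

definition decomposable_ideal :: "nat \<Rightarrow> (nat \<Rightarrow> bool) \<Rightarrow> (qpath \<Rightarrow> 'k::field) set \<Rightarrow> bool" where
  "decomposable_ideal n dir I = (\<exists>J K. is_ideal n dir J \<and> is_ideal n dir K \<and>
      J \<noteq> {\<lambda>_. 0} \<and> K \<noteq> {\<lambda>_. 0} \<and> J \<inter> K = {\<lambda>_. 0} \<and>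
      I = {(\<lambda>r. j r + k r) | j k. j \<in> J \<and> k \<in> K})"

definition indecomposable_ideal :: "nat \<Rightarrow> (nat \<Rightarrow> bool) \<Rightarrow> (qpath \<Rightarrow> 'k::field) set \<Rightarrow> bool" where
  "indecomposable_ideal n dir I = (I \<noteq> {\<lambda>_. 0} \<and> \<not> decomposable_ideal n dir I)"

definition gamma_vertices :: "nat \<Rightarrow> (nat \<Rightarrow> bool) \<Rightarrow> (qpath \<Rightarrow> 'k::field) set \<Rightarrow> qpath set" where
  "gamma_vertices n dir I = {w. maximal_path n dir w \<and> path_elem w \<in> I}"

definition gamma_edges :: "nat \<Rightarrow> (nat \<Rightarrow> bool) \<Rightarrow> (qpath \<Rightarrow> 'k::field) set \<Rightarrow> nat set" where
  "gamma_edges n dir I = {x. (is_source n dir x \<or> is_sink n dir x) \<and> path_elem (x, []) \<in> I}"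

definition is_endpoint :: "nat \<Rightarrow> (nat \<Rightarrow> bool) \<Rightarrow> nat \<Rightarrow> qpath \<Rightarrow> bool" where
  "is_endpoint n dir x w = (x = path_start w \<or> x = path_end n dir w)"

definition gamma_adj :: "nat \<Rightarrow> (nat \<Rightarrow> bool) \<Rightarrow> (qpath \<Rightarrow> 'k::field) set \<Rightarrow> (qpath \<times> qpath) set" where
  "gamma_adj n dir I = {(w, u). w \<in> gamma_vertices n dir I \<and> u \<in> gamma_vertices n dir I \<and>
      (\<exists>x \<in> gamma_edges n dir I. is_endpoint n dir x w \<and> is_endpoint n dir x u)}"

definition gamma_connected :: "nat \<Rightarrow> (nat \<Rightarrow> bool) \<Rightarrow> (qpath \<Rightarrow> 'k::field) set \<Rightarrow> bool" where
  "gamma_connected n dir I = (gamma_vertices n dir I \<noteq> {} \<and>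
      (\<forall>w \<in> gamma_vertices n dir I. \<forall>u \<in> gamma_vertices n dir I. (w, u) \<in> (gamma_adj n dir I)\<^sup>*))"

end

theory Submission
  imports Defs
begin

text \<open>
  Every vertex of the cycle lies on at most two arrows, so two distinct maximal paths above a
  common path p exist only when p is the trivial path at a source or sink touched by both.
  Hence, if \<open>\<Gamma>\<^sub>I\<close> is disconnected, the paths of I below one union of components and those
  below the remaining vertices span two ideals whose direct sum is I.
  Conversely, let \<open>I = J \<oplus> K\<close>. For an edge x of \<open>\<Gamma>\<^sub>I\<close> the corner \<open>\<epsilon>\<^sub>x kQ \<epsilon>\<^sub>x\<close> is
  \<open>k \<epsilon>\<^sub>x\<close>, so \<open>\<epsilon>\<^sub>x\<close> lies in J or in K. An edge in J pulls the maximal paths at it into J,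
  these pull their other edges into J, and along a connected \<open>\<Gamma>\<^sub>I\<close> every vertex gets an
  edge in J, which leaves no room for K. If \<open>\<Gamma>\<^sub>I\<close> is a single vertex w without edges, every
  non-zero ideal inside I contains w.
\<close>

section \<open>Paths in an orientation of the cycle\<close>

lemma fst_pconcat [simp]: "fst (pconcat p q) = fst p"
  and snd_pconcat [simp]: "snd (pconcat p q) = snd p @ snd q"
  by (simp_all add: pconcat_def)

lemma pvalid_less: "pvalid n dir x as \<Longrightarrow> x < n"
  by (cases as) (auto simp: arr_src_def split: if_splits)

lemma pend_less: "pvalid n dir x as \<Longrightarrow> pend n dir x as < n"
  by (induction as arbitrary: x) auto

lemma arr_src_less: "a < n \<Longrightarrow> arr_src n dir a < n"
  and arr_tgt_less: "a < n \<Longrightarrow> arr_tgt n dir a < n"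
  by (auto simp: arr_src_def arr_tgt_def)

lemma pvalid_append:
  "pvalid n dir x (as @ bs) \<longleftrightarrow> pvalid n dir x as \<and> pvalid n dir (pend n dir x as) bs"
  by (induction as arbitrary: x) (auto dest: pvalid_less)

lemma pend_append: "pend n dir x (as @ bs) = pend n dir (pend n dir x as) bs"
  by (induction as arbitrary: x) auto

lemma pvalid_snoc:
  "pvalid n dir x (as @ [a]) \<longleftrightarrow> pvalid n dir x as \<and> a < n \<and> pend n dir x as = arr_src n dir a"
  by (auto simp: pvalid_append arr_tgt_less)

lemma pend_snoc: "pend n dir x (as @ [a]) = arr_tgt n dir a"
  by (simp add: pend_append)

lemma is_path_trivial: "x < n \<Longrightarrow> is_path n dir (x, [])"
  by (simp add: is_path_def)

lemma is_path_start_less: "is_path n dir p \<Longrightarrow> fst p < n"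
  and is_path_end_less: "is_path n dir p \<Longrightarrow> path_end n dir p < n"
  by (auto simp: is_path_def path_end_def pvalid_less pend_less)

lemma is_path_arrow: "a < n \<Longrightarrow> is_path n dir (arr_src n dir a, [a])"
  by (simp add: is_path_def arr_src_less arr_tgt_less)

lemma is_path_pconcat:
  "is_path n dir p \<Longrightarrow> is_path n dir q \<Longrightarrow> composable n dir p q \<Longrightarrow> is_path n dir (pconcat p q)"
  by (auto simp: is_path_def composable_def path_end_def path_start_def pvalid_append)

lemma path_end_pconcat:
  "composable n dir p q \<Longrightarrow> path_end n dir (pconcat p q) = path_end n dir q"
  by (auto simp: pconcat_def composable_def path_end_def path_start_def pend_append)

lemma composable_pconcat:
  "composable n dir a p \<Longrightarrow> composable n dir p b \<Longrightarrow> composable n dir (pconcat a p) b"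
  by (simp add: composable_def path_end_pconcat)

lemma pconcat_trivial_left: "pconcat (fst w, []) w = w"
  and pconcat_trivial_right: "pconcat w (x, []) = w"
  by (simp_all add: pconcat_def)

lemma admissible_no_cycle:
  "admissible n dir \<Longrightarrow> is_path n dir p \<Longrightarrow> path_end n dir p = fst p \<Longrightarrow> snd p = []"
  unfolding admissible_def path_start_def by blast

text \<open>Otherwise two of the first n + 1 vertices visited coincide, and the path between them
  is an oriented cycle.\<close>
lemma admissible_length_less:
  assumes adm: "admissible n dir" and valid: "pvalid n dir x as"
  shows "length as < n"
proof (rule ccontr)
  assume "\<not> length as < n"
  define visit where "visit i = pend n dir x (take i as)" for i
  have valid_take: "pvalid n dir x (take i as)" for i
    using valid pvalid_append[of n dir x "take i as" "drop i as"] by simp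
  have "visit ` {..n} \<subseteq> {..<n}"
    using valid_take pend_less by (auto simp: visit_def)
  then have "\<not> inj_on visit {..n}"
    using card_mono[of "{..<n}" "visit ` {..n}"] card_image by fastforce
  then obtain i j where ij: "i < j" "j \<le> n" "visit i = visit j"
    unfolding inj_on_def by (metis atMost_iff linorder_neqE_nat)
  define cyc where "cyc = drop i (take j as)"
  have split: "take j as = take i as @ cyc"
    using ij by (metis cyc_def append_take_drop_id less_imp_le min.absorb1 take_take)
  have "pvalid n dir x (take i as @ cyc)"
    using valid_take[of j] by (simp only: split)
  then have "pvalid n dir (visit i) cyc"
    by (simp add: pvalid_append visit_def)
  moreover have "pend n dir (visit i) cyc = visit i"
    using ij(3) by (simp add: visit_def split pend_append)
  moreover have "cyc \<noteq> []"
    using ij \<open>\<not> length as < n\<close> by (simp add: cyc_def)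
  ultimately show False
    using admissible_no_cycle[OF adm, of "(visit i, cyc)"] by (simp add: is_path_def path_end_def)
qed

section \<open>The order \<open>\<le>\<^sub>J\<close> and maximal paths\<close>

lemma le_JI:
  "is_path n dir a \<Longrightarrow> is_path n dir b \<Longrightarrow> composable n dir a w \<Longrightarrow> composable n dir w b \<Longrightarrow>
    le_J n dir w (pconcat (pconcat a w) b)"
  unfolding le_J_def by blast

lemma le_J_prepend:
  assumes "is_path n dir a" "is_path n dir w" "composable n dir a w"
  shows "le_J n dir w (pconcat a w)"
  using le_JI[OF assms(1) is_path_trivial[OF is_path_end_less[OF assms(2)]] assms(3)]
  by (simp add: composable_def path_start_def pconcat_trivial_right)

lemma le_J_append:
  assumes "is_path n dir w" "is_path n dir b" "composable n dir w b"
  shows "le_J n dir w (pconcat w b)"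
  using le_JI[OF is_path_trivial[OF is_path_start_less[OF assms(1)]] assms(2) _ assms(3)]
  by (simp add: composable_def path_start_def path_end_def pconcat_trivial_left)

lemma le_J_refl: "is_path n dir p \<Longrightarrow> le_J n dir p p"
  using le_J_append[of n dir p "(path_end n dir p, [])"]
  by (simp add: is_path_trivial is_path_end_less composable_def path_start_def
      pconcat_trivial_right)

lemma le_J_trans:
  assumes "le_J n dir p w" "le_J n dir w u"
  shows "le_J n dir p u"
proof -
  obtain a1 b1 where 1: "is_path n dir a1" "is_path n dir b1" "composable n dir a1 p"
    "composable n dir p b1" "w = pconcat (pconcat a1 p) b1"
    using assms(1) unfolding le_J_def by blast
  obtain a2 b2 where 2: "is_path n dir a2" "is_path n dir b2" "composable n dir a2 w"
    "composable n dir w b2" "u = pconcat (pconcat a2 w) b2"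
    using assms(2) unfolding le_J_def by blast
  have a: "composable n dir a2 a1"
    using 1 2 by (simp add: composable_def path_start_def)
  have "path_end n dir w = path_end n dir b1"
    using 1(3-5) by (simp add: path_end_pconcat composable_pconcat)
  then have b: "composable n dir b1 b2"
    using 2(4) by (simp add: composable_def)
  have "u = pconcat (pconcat (pconcat a2 a1) p) (pconcat b1 b2)"
    using 1 2 by (simp add: pconcat_def)
  moreover have "composable n dir (pconcat a2 a1) p" "composable n dir p (pconcat b1 b2)"
    using 1 a by (simp_all add: composable_def path_end_pconcat path_start_def)
  ultimately show ?thesis
    using le_JI[of n dir "pconcat a2 a1" "pconcat b1 b2" p] 1 2 a b
    by (simp add: is_path_pconcat)
qed

lemma le_J_length_eq:
  assumes "le_J n dir p u" "length (snd u) \<le> length (snd p)"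
  shows "u = p"
proof -
  obtain a b where ab: "composable n dir a p" "u = pconcat (pconcat a p) b"
    using assms(1) unfolding le_J_def by blast
  with assms(2) have "snd a = []" "snd b = []" by auto
  with ab show ?thesis
    by (simp add: composable_def path_start_def path_end_def prod_eq_iff)
qed

text \<open>The surplus on either side would be an oriented cycle.\<close>
lemma le_J_same_ends:
  assumes adm: "admissible n dir" and le: "le_J n dir r w"
    and start: "fst r = fst w" and end_eq: "path_end n dir r = path_end n dir w"
  shows "r = w"
proof -
  obtain a b where ab: "is_path n dir a" "is_path n dir b" "composable n dir a r"
    "composable n dir r b" "w = pconcat (pconcat a r) b"
    using le unfolding le_J_def by blast
  have "snd a = []"
    using admissible_no_cycle[OF adm ab(1)] ab(3,5) start
    by (simp add: composable_def path_start_def)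
  moreover have "snd b = []"
    using admissible_no_cycle[OF adm ab(2)] ab(4,5) end_eq
    by (metis composable_def composable_pconcat path_end_pconcat path_start_def ab(3))
  ultimately show ?thesis
    using le_J_length_eq[OF le] ab(5) by simp
qed

lemma exists_maximal_above:
  assumes adm: "admissible n dir" and p: "is_path n dir p"
  obtains v where "maximal_path n dir v" "le_J n dir p v"
proof -
  define above where "above u \<longleftrightarrow> is_path n dir u \<and> le_J n dir p u" for u
  have "above p"
    using p le_J_refl by (auto simp: above_def)
  moreover have "length (snd u) < n" if "above u" for u
    using that admissible_length_less[OF adm] by (auto simp: above_def is_path_def)
  ultimately obtain v where v: "above v" "\<And>u. above u \<Longrightarrow> length (snd u) \<le> length (snd v)"
    using ex_has_greatest_nat[of above p "\<lambda>u. length (snd u)" n] by blast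
  have "maximal_path n dir v"
    unfolding maximal_path_def
  proof (intro conjI allI impI)
    show "is_path n dir v" using v(1) by (simp add: above_def)
    fix u assume "is_path n dir u \<and> le_J n dir v u"
    moreover from this have "above u"
      using v(1) le_J_trans unfolding above_def by blast
    ultimately show "u = v"
      using v(2) le_J_length_eq by blast
  qed
  with v(1) show ?thesis
    using that by (simp add: above_def)
qed

lemma maximal_path_start_source:
  assumes max: "maximal_path n dir v"
  shows "is_source n dir (fst v)"
proof (rule ccontr)
  have v: "is_path n dir v" using max by (simp add: maximal_path_def)
  assume "\<not> is_source n dir (fst v)"
  then obtain i where i: "i < n" "arr_tgt n dir i = fst v"
    using is_path_start_less[OF v] by (auto simp: is_source_def)
  let ?a = "(arr_src n dir i, [i])"
  have comp: "composable n dir ?a v"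
    using i by (simp add: composable_def path_end_def path_start_def)
  have "pconcat ?a v = v"
    using max le_J_prepend[OF is_path_arrow[OF i(1)] v comp]
      is_path_pconcat[OF is_path_arrow[OF i(1)] v comp]
    unfolding maximal_path_def by blast
  then have "length (snd (pconcat ?a v)) = length (snd v)" by simp
  then show False by simp
qed

lemma maximal_path_end_sink:
  assumes max: "maximal_path n dir v"
  shows "is_sink n dir (path_end n dir v)"
proof (rule ccontr)
  have v: "is_path n dir v" using max by (simp add: maximal_path_def)
  assume "\<not> is_sink n dir (path_end n dir v)"
  then obtain i where i: "i < n" "arr_src n dir i = path_end n dir v"
    using is_path_end_less[OF v] by (auto simp: is_sink_def)
  let ?b = "(arr_src n dir i, [i])"
  have comp: "composable n dir v ?b"
    using i by (simp add: composable_def path_start_def)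
  have "pconcat v ?b = v"
    using max le_J_append[OF v is_path_arrow[OF i(1)] comp]
      is_path_pconcat[OF v is_path_arrow[OF i(1)] comp]
    unfolding maximal_path_def by blast
  then have "length (snd (pconcat v ?b)) = length (snd v)" by simp
  then show False by simp
qed

section \<open>Local structure of the cycle\<close>

lemma arrow_not_loop: "admissible n dir \<Longrightarrow> a < n \<Longrightarrow> arr_src n dir a \<noteq> arr_tgt n dir a"
  using admissible_no_cycle[of n dir "(arr_src n dir a, [a])"]
  by (auto simp: is_path_arrow path_end_def)

text \<open>Arrow i meets only the vertices i and i + 1 mod n, and \<open>i \<mapsto> i + 1 mod n\<close> is injective.\<close>
lemma no_three_arrows_at_vertex:
  assumes "a < n" "b < n" "c < n" "distinct [a, b, c]"
    and "\<forall>i\<in>{a, b, c}. arr_src n dir i = y \<or> arr_tgt n dir i = y"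
  shows False
proof -
  have incident: "i = y \<or> Suc i mod n = y" if "i \<in> {a, b, c}" for i
    using assms(5) that by (auto simp: arr_src_def arr_tgt_def split: if_splits)
  have "inj_on (\<lambda>i. Suc i mod n) {a, b, c}"
    using assms(1-3) by (auto simp: inj_on_def mod_Suc split: if_splits)
  then show False
    using incident assms(4) by (simp add: inj_on_def) metis
qed

lemma unique_out_arrow:
  assumes adm: "admissible n dir" and "c < n" "arr_tgt n dir c = y"
    and "a < n" "b < n" "arr_src n dir a = y" "arr_src n dir b = y"
  shows "a = b"
proof -
  have "c \<noteq> a" "c \<noteq> b"
    using arrow_not_loop[OF adm] assms by metis+
  then show ?thesis
    using no_three_arrows_at_vertex[of a n b c dir y] assms by auto
qed

lemma unique_in_arrow:
  assumes adm: "admissible n dir" and "c < n" "arr_src n dir c = y"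
    and "a < n" "b < n" "arr_tgt n dir a = y" "arr_tgt n dir b = y"
  shows "a = b"
proof -
  have "c \<noteq> a" "c \<noteq> b"
    using arrow_not_loop[OF adm] assms by metis+
  then show ?thesis
    using no_three_arrows_at_vertex[of a n b c dir y] assms by auto
qed

text \<open>A vertex with an incoming arrow has only one outgoing arrow, so the way on to a sink
  is forced.\<close>
lemma sink_extension_unique:
  assumes adm: "admissible n dir"
  shows "pvalid n dir y bs \<Longrightarrow> pvalid n dir y bs' \<Longrightarrow> is_sink n dir (pend n dir y bs) \<Longrightarrow>
    is_sink n dir (pend n dir y bs') \<Longrightarrow> c < n \<Longrightarrow> arr_tgt n dir c = y \<Longrightarrow> bs = bs'"
proof (induction bs arbitrary: y bs' c)
  case Nil
  then show ?case by (cases bs') (auto simp: is_sink_def)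
next
  case (Cons a bs)
  then obtain b bs'' where bs': "bs' = b # bs''"
    by (cases bs') (auto simp: is_sink_def)
  have "a = b"
    using unique_out_arrow[OF adm Cons.prems(5,6)] Cons.prems(1,2) bs' by auto
  then show ?case
    using Cons.IH[of "arr_tgt n dir a" bs'' a] Cons.prems(1-4) bs' by auto
qed

lemma source_extension_unique:
  assumes adm: "admissible n dir"
  shows "pvalid n dir s as \<Longrightarrow> pvalid n dir s' as' \<Longrightarrow> pend n dir s as = y \<Longrightarrow> pend n dir s' as' = y \<Longrightarrow>
    is_source n dir s \<Longrightarrow> is_source n dir s' \<Longrightarrow> c < n \<Longrightarrow> arr_src n dir c = y \<Longrightarrow> s = s' \<and> as = as'"
proof (induction as arbitrary: y as' c rule: rev_induct)
  case Nil
  then show ?case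
    by (cases as' rule: rev_cases) (auto simp: is_source_def pvalid_snoc pend_snoc)
next
  case (snoc a as)
  then obtain as'' b where as': "as' = as'' @ [b]"
    by (cases as' rule: rev_cases) (auto simp: is_source_def pvalid_snoc pend_snoc)
  have "a = b"
    using unique_in_arrow[OF adm snoc.prems(7,8)] snoc.prems(1-4) as'
    by (auto simp: pvalid_snoc pend_snoc)
  then show ?case
    using snoc.IH[of as'' "arr_src n dir a" a] snoc.prems as'
    by (auto simp: pvalid_snoc pend_snoc)
qed

lemma le_J_decomp:
  assumes "le_J n dir p v" "is_path n dir v"
  obtains as bs where "v = (fst v, as @ snd p @ bs)"
    "pvalid n dir (fst v) as" "pend n dir (fst v) as = fst p"
    "pvalid n dir (path_end n dir p) bs" "pend n dir (path_end n dir p) bs = path_end n dir v"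
proof -
  obtain a b where ab: "composable n dir a p" "v = pconcat (pconcat a p) b"
    using assms(1) unfolding le_J_def by blast
  have "pvalid n dir (fst a) (snd a @ snd p @ snd b)"
    using assms(2) ab(2) by (simp add: is_path_def)
  moreover have "pend n dir (fst a) (snd a) = fst p"
    using ab(1) by (simp add: composable_def path_end_def path_start_def)
  ultimately show ?thesis
    using that[of "snd a" "snd b"] ab(2)
    by (simp add: pvalid_append pend_append path_end_def pconcat_def)
qed

lemma is_path_le_J:
  assumes "le_J n dir p v" "is_path n dir v"
  shows "is_path n dir p"
proof -
  obtain as bs where "v = (fst v, as @ snd p @ bs)" "pend n dir (fst v) as = fst p"
    using le_J_decomp[OF assms] by metis
  moreover from this have "pvalid n dir (fst v) (as @ snd p @ bs)"
    using assms(2) unfolding is_path_def by (metis snd_conv)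
  ultimately show ?thesis
    by (simp add: is_path_def pvalid_append)
qed

lemma le_J_start_source:
  assumes "le_J n dir p v" "is_path n dir v" "is_source n dir (fst p)"
  shows "fst v = fst p"
proof -
  obtain as where "pvalid n dir (fst v) as" "pend n dir (fst v) as = fst p"
    using le_J_decomp[OF assms(1,2)] by metis
  with assms(3) show ?thesis
    by (cases as rule: rev_cases) (auto simp: is_source_def pvalid_snoc pend_snoc)
qed

lemma le_J_end_sink:
  assumes "le_J n dir p v" "is_path n dir v" "is_sink n dir (path_end n dir p)"
  shows "path_end n dir v = path_end n dir p"
proof -
  obtain bs where "pvalid n dir (path_end n dir p) bs"
    "pend n dir (path_end n dir p) bs = path_end n dir v"
    using le_J_decomp[OF assms(1,2)] by metis
  with assms(3) show ?thesis
    by (cases bs) (auto simp: is_sink_def)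
qed

lemma maximal_paths_above_eq:
  assumes adm: "admissible n dir"
    and max1: "maximal_path n dir v1" and max2: "maximal_path n dir v2"
    and le1: "le_J n dir p v1" and le2: "le_J n dir p v2"
    and out: "c < n" "arr_src n dir c = fst p"
    and into: "c' < n" "arr_tgt n dir c' = path_end n dir p"
  shows "v1 = v2"
proof -
  have paths: "is_path n dir v1" "is_path n dir v2"
    using max1 max2 by (simp_all add: maximal_path_def)
  obtain as1 bs1 where 1: "v1 = (fst v1, as1 @ snd p @ bs1)"
    "pvalid n dir (fst v1) as1" "pend n dir (fst v1) as1 = fst p"
    "pvalid n dir (path_end n dir p) bs1" "pend n dir (path_end n dir p) bs1 = path_end n dir v1"
    using le_J_decomp[OF le1 paths(1)] by blast
  obtain as2 bs2 where 2: "v2 = (fst v2, as2 @ snd p @ bs2)"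
    "pvalid n dir (fst v2) as2" "pend n dir (fst v2) as2 = fst p"
    "pvalid n dir (path_end n dir p) bs2" "pend n dir (path_end n dir p) bs2 = path_end n dir v2"
    using le_J_decomp[OF le2 paths(2)] by blast
  have "fst v1 = fst v2 \<and> as1 = as2"
    using source_extension_unique[OF adm 1(2) 2(2) 1(3) 2(3)] max1 max2 out
    by (simp add: maximal_path_start_source)
  moreover have "bs1 = bs2"
    using sink_extension_unique[OF adm 1(4) 2(4)] max1 max2 into 1(5) 2(5)
    by (simp add: maximal_path_end_sink)
  ultimately show ?thesis
    using 1(1) 2(1) by (metis prod_eqI fst_conv snd_conv)
qed

lemma maximal_paths_above_distinct:
  assumes adm: "admissible n dir"
    and max1: "maximal_path n dir v1" and max2: "maximal_path n dir v2"
    and le1: "le_J n dir p v1" and le2: "le_J n dir p v2" and neq: "v1 \<noteq> v2"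
  shows "snd p = [] \<and> (is_source n dir (fst p) \<or> is_sink n dir (fst p)) \<and>
    is_endpoint n dir (fst p) v1 \<and> is_endpoint n dir (fst p) v2"
proof -
  have paths: "is_path n dir v1" "is_path n dir v2"
    using max1 max2 by (simp_all add: maximal_path_def)
  have p: "pvalid n dir (fst p) (snd p)"
    using is_path_le_J[OF le1 paths(1)] by (simp add: is_path_def)
  have no_through_path: False
    if "c < n" "arr_src n dir c = fst p" "c' < n" "arr_tgt n dir c' = path_end n dir p" for c c'
    using maximal_paths_above_eq[OF adm max1 max2 le1 le2 that] neq by blast
  show ?thesis
  proof (cases "snd p" rule: rev_cases)
    case Nil
    then have "path_end n dir p = fst p"
      by (simp add: path_end_def)
    moreover have "fst p < n"
      using pvalid_less[OF p] .
    ultimately have "is_source n dir (fst p) \<or> is_sink n dir (fst p)"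
      using no_through_path by (auto simp: is_source_def is_sink_def)
    then show ?thesis
      using Nil \<open>path_end n dir p = fst p\<close>
        le_J_start_source[OF le1 paths(1)] le_J_start_source[OF le2 paths(2)]
        le_J_end_sink[OF le1 paths(1)] le_J_end_sink[OF le2 paths(2)]
      by (auto simp: is_endpoint_def path_start_def)
  next
    case (snoc as c')
    then obtain c cs where "snd p = c # cs"
      by (cases as) auto
    then have "c < n" "arr_src n dir c = fst p"
      using p by simp_all
    moreover have "c' < n" "arr_tgt n dir c' = path_end n dir p"
      using p snoc by (simp_all add: pvalid_snoc pend_snoc path_end_def)
    ultimately show ?thesis
      using no_through_path by blast
  qed
qed

section \<open>Multiplication in the path algebra\<close>

definition factorizations :: "nat \<Rightarrow> (nat \<Rightarrow> bool) \<Rightarrow> qpath \<Rightarrow> (qpath \<times> qpath) set" where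
  "factorizations n dir r = {(p, q). is_path n dir p \<and> is_path n dir q \<and>
     composable n dir p q \<and> pconcat p q = r}"

lemma pmult_eq_sum: "pmult n dir f g r = (\<Sum>(p, q) \<in> factorizations n dir r. f p * g q)"
  by (simp add: pmult_def factorizations_def)

lemma finite_factorizations: "finite (factorizations n dir r)"
proof (rule finite_subset)
  let ?split = "\<lambda>i. ((fst r, take i (snd r)),
    (pend n dir (fst r) (take i (snd r)), drop i (snd r)))"
  show "factorizations n dir r \<subseteq> ?split ` {..length (snd r)}"
  proof
    fix z assume "z \<in> factorizations n dir r"
    then obtain p q where z: "z = (p, q)" "composable n dir p q" "pconcat p q = r"
      by (auto simp: factorizations_def)
    then have "z = ?split (length (snd p))"
      unfolding z(1) z(3)[symmetric] by (simp add: composable_def path_end_def path_start_def)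
    moreover have "length (snd p) \<le> length (snd r)"
      using z(3) by auto
    ultimately show "z \<in> ?split ` {..length (snd r)}"
      by blast
  qed
qed simp

lemma pmult_nonzero:
  assumes "pmult n dir f g r \<noteq> 0"
  obtains p q where "(p, q) \<in> factorizations n dir r" "f p \<noteq> 0" "g q \<noteq> 0"
proof -
  obtain z where "z \<in> factorizations n dir r" "(case z of (p, q) \<Rightarrow> f p * g q) \<noteq> 0"
    using assms sum.not_neutral_contains_not_neutral by (metis pmult_eq_sum)
  then show ?thesis
    using that by (cases z) auto
qed

lemma pmult_nonzero_is_path:
  assumes "pmult n dir f g r \<noteq> 0"
  shows "is_path n dir r"
proof -
  obtain p q where "(p, q) \<in> factorizations n dir r"
    using assms by (rule pmult_nonzero)
  then show ?thesis
    unfolding factorizations_def using is_path_pconcat by blast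
qed

lemma pmult_single_term:
  assumes "(p0, q0) \<in> factorizations n dir r"
    and "\<And>p q. (p, q) \<in> factorizations n dir r \<Longrightarrow> (p, q) \<noteq> (p0, q0) \<Longrightarrow> f p * g q = 0"
  shows "pmult n dir f g r = f p0 * g q0"
proof -
  have "pmult n dir f g r = f p0 * g q0 +
      (\<Sum>(p, q) \<in> factorizations n dir r - {(p0, q0)}. f p * g q)"
    unfolding pmult_eq_sum
    using sum.remove[OF finite_factorizations assms(1), of "\<lambda>(p, q). f p * g q"] by simp
  also have "(\<Sum>(p, q) \<in> factorizations n dir r - {(p0, q0)}. f p * g q) = 0"
    using assms(2) by (intro sum.neutral) force
  finally show ?thesis by simp
qed

lemma pmult_path_elem_left:
  assumes "is_path n dir a" "is_path n dir u" "composable n dir a u"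
  shows "pmult n dir (path_elem a) f (pconcat a u) = f u"
proof -
  have "pmult n dir (path_elem a) f (pconcat a u) = path_elem a a * f u"
  proof (rule pmult_single_term)
    show "(a, u) \<in> factorizations n dir (pconcat a u)"
      using assms by (simp add: factorizations_def)
    fix p q assume "(p, q) \<in> factorizations n dir (pconcat a u)" "(p, q) \<noteq> (a, u)"
    then show "path_elem a p * f q = 0"
      using assms(3)
      by (auto simp: factorizations_def path_elem_def composable_def path_start_def path_end_def
          prod_eq_iff)
  qed
  then show ?thesis by (simp add: path_elem_def)
qed

lemma pmult_path_elem_right:
  assumes "is_path n dir u" "is_path n dir b" "composable n dir u b"
  shows "pmult n dir f (path_elem b) (pconcat u b) = f u"
proof -
  have "pmult n dir f (path_elem b) (pconcat u b) = f u * path_elem b b"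
  proof (rule pmult_single_term)
    show "(u, b) \<in> factorizations n dir (pconcat u b)"
      using assms by (simp add: factorizations_def)
    fix p q assume "(p, q) \<in> factorizations n dir (pconcat u b)" "(p, q) \<noteq> (u, b)"
    then show "f p * path_elem b q = 0"
      by (auto simp: factorizations_def path_elem_def prod_eq_iff)
  qed
  then show ?thesis by (simp add: path_elem_def)
qed

lemma pmult_path_elem_left_nonzero:
  assumes "pmult n dir (path_elem a) f r \<noteq> 0"
  obtains u where "is_path n dir u" "composable n dir a u" "r = pconcat a u" "f u \<noteq> 0"
  using assms by (rule pmult_nonzero) (auto simp: factorizations_def path_elem_def split: if_splits)

lemma pmult_path_elem_right_nonzero:
  assumes "pmult n dir f (path_elem b) r \<noteq> 0"
  obtains u where "is_path n dir u" "composable n dir u b" "r = pconcat u b" "f u \<noteq> 0"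
  using assms by (rule pmult_nonzero) (auto simp: factorizations_def path_elem_def split: if_splits)

lemma pmult_path_elem_sandwich_nonzero:
  assumes "pmult n dir (pmult n dir (path_elem a) f) (path_elem b) r \<noteq> 0"
  shows "fst r = fst a \<and> path_end n dir r = path_end n dir b"
proof -
  obtain u where u: "composable n dir u b" "r = pconcat u b" "pmult n dir (path_elem a) f u \<noteq> 0"
    using assms by (rule pmult_path_elem_right_nonzero)
  from u(3) obtain q where "u = pconcat a q"
    by (rule pmult_path_elem_left_nonzero)
  with u(1,2) show ?thesis
    by (simp add: path_end_pconcat)
qed

lemma pmult_trivial_start_nonzero:
  assumes a: "is_path n dir a" and p: "is_path n dir p" and ap: "composable n dir a p"
    and fp: "f p \<noteq> 0"
  shows "pmult n dir (path_elem (fst a, [])) (pmult n dir (path_elem a) f) \<noteq> (\<lambda>_. 0)"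
proof -
  have comp: "composable n dir (fst a, []) (pconcat a p)"
    by (simp add: composable_def path_end_def path_start_def)
  have "pmult n dir (path_elem (fst a, [])) (pmult n dir (path_elem a) f)
      (pconcat (fst a, []) (pconcat a p)) = f p"
    using pmult_path_elem_left[OF is_path_trivial[OF is_path_start_less[OF a]]
        is_path_pconcat[OF a p ap] comp, of "pmult n dir (path_elem a) f"]
      pmult_path_elem_left[OF a p ap, of f] by simp
  with fp show ?thesis
    by (metis (mono_tags))
qed

lemma pmult_trivial_end_nonzero:
  assumes p: "is_path n dir p" and b: "is_path n dir b" and pb: "composable n dir p b"
    and fp: "f p \<noteq> 0"
  shows "pmult n dir (pmult n dir f (path_elem b)) (path_elem (path_end n dir b, [])) \<noteq> (\<lambda>_. 0)"
proof -
  have comp: "composable n dir (pconcat p b) (path_end n dir b, [])"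
    using pb by (simp add: composable_def path_start_def path_end_pconcat)
  have "pmult n dir (pmult n dir f (path_elem b)) (path_elem (path_end n dir b, []))
      (pconcat (pconcat p b) (path_end n dir b, [])) = f p"
    using pmult_path_elem_right[OF is_path_pconcat[OF p b pb]
        is_path_trivial[OF is_path_end_less[OF b]] comp, of "pmult n dir f (path_elem b)"]
      pmult_path_elem_right[OF p b pb, of f] by simp
  with fp show ?thesis
    by (metis (mono_tags))
qed

lemma pmult_path_elem:
  assumes "is_path n dir a" "is_path n dir b" "composable n dir a b"
  shows "pmult n dir (path_elem a) (path_elem b) = (path_elem (pconcat a b) :: qpath \<Rightarrow> 'k::field)"
proof
  fix r
  show "pmult n dir (path_elem a) (path_elem b) r = (path_elem (pconcat a b) r :: 'k)"
  proof (cases "r = pconcat a b")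
    case True
    then show ?thesis
      using pmult_path_elem_left[OF assms, of "path_elem b"] by (simp add: path_elem_def)
  next
    case False
    then show ?thesis
      using pmult_path_elem_left_nonzero[of n dir a "path_elem b" r]
      by (fastforce simp: path_elem_def split: if_splits)
  qed
qed

lemma path_elem_trivial_mult_left:
  "is_path n dir w \<Longrightarrow>
    pmult n dir (path_elem (fst w, [])) (path_elem w) = (path_elem w :: qpath \<Rightarrow> 'k::field)"
  using pmult_path_elem[of n dir "(fst w, [])" w]
  by (simp add: is_path_trivial is_path_start_less composable_def path_end_def path_start_def
      pconcat_trivial_left)

lemma path_elem_trivial_mult_right:
  "is_path n dir w \<Longrightarrow>
    pmult n dir (path_elem w) (path_elem (path_end n dir w, [])) =
      (path_elem w :: qpath \<Rightarrow> 'k::field)"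
  using pmult_path_elem[of n dir w "(path_end n dir w, [])"]
  by (simp add: is_path_trivial is_path_end_less composable_def path_start_def
      pconcat_trivial_right)

text \<open>As Q has no oriented cycles, the corner algebra \<open>\<epsilon>\<^sub>x kQ \<epsilon>\<^sub>x\<close> is just \<open>k \<epsilon>\<^sub>x\<close>.\<close>
lemma pmult_corner_trivial:
  fixes f :: "qpath \<Rightarrow> 'k::field"
  assumes adm: "admissible n dir" and x: "x < n"
  shows "pmult n dir (pmult n dir (path_elem (x, [])) f) (path_elem (x, [])) =
    (\<lambda>r. f (x, []) * path_elem (x, []) r)"
proof
  fix r
  have triv: "is_path n dir (x, [])" "composable n dir (x, []) (x, [])"
    using x by (simp_all add: is_path_trivial composable_def path_end_def path_start_def)
  show "pmult n dir (pmult n dir (path_elem (x, [])) f) (path_elem (x, [])) r =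
    f (x, []) * path_elem (x, []) r"
  proof (cases "r = (x, [])")
    case True
    then show ?thesis
      using pmult_path_elem_right[OF triv(1,1,2), of "pmult n dir (path_elem (x, [])) f"]
        pmult_path_elem_left[OF triv(1,1,2), of f]
      by (simp add: pconcat_trivial_right path_elem_def)
  next
    case False
    have "pmult n dir (pmult n dir (path_elem (x, [])) f) (path_elem (x, [])) r = 0"
    proof (rule ccontr)
      assume nz: "pmult n dir (pmult n dir (path_elem (x, [])) f) (path_elem (x, [])) r \<noteq> 0"
      then have start: "fst r = x" and closed: "path_end n dir r = fst r"
        using pmult_path_elem_sandwich_nonzero[OF nz] by (auto simp: path_end_def)
      moreover have "snd r = []"
        using admissible_no_cycle[OF adm pmult_nonzero_is_path[OF nz] closed] .
      ultimately show False
        using False by (simp add: prod_eq_iff)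
    qed
    with False show ?thesis
      by (simp add: path_elem_def)
  qed
qed

section \<open>Linearized semigroup ideals and the graph \<open>\<Gamma>\<^sub>I\<close>\<close>

definition span_of :: "nat \<Rightarrow> (nat \<Rightarrow> bool) \<Rightarrow> qpath set \<Rightarrow> (qpath \<Rightarrow> 'k::field) set" where
  "span_of n dir Y = {f \<in> pathalg n dir. \<forall>p. f p \<noteq> 0 \<longrightarrow> p \<in> Y}"

lemma span_ofD: "f \<in> span_of n dir Y \<Longrightarrow> f p \<noteq> 0 \<Longrightarrow> p \<in> Y"
  unfolding span_of_def by blast

definition up_closed :: "nat \<Rightarrow> (nat \<Rightarrow> bool) \<Rightarrow> qpath set \<Rightarrow> bool" where
  "up_closed n dir Y \<longleftrightarrow> (\<forall>w\<in>Y. \<forall>u. le_J n dir w u \<longrightarrow> u \<in> Y)"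

lemma up_closedD: "up_closed n dir Y \<Longrightarrow> w \<in> Y \<Longrightarrow> le_J n dir w u \<Longrightarrow> u \<in> Y"
  unfolding up_closed_def by blast

lemma lin_semigroup_ideal_iff:
  "lin_semigroup_ideal n dir I \<longleftrightarrow>
    (\<exists>X. X \<subseteq> {p. is_path n dir p} \<and> up_closed n dir X \<and> I = span_of n dir X)"
proof -
  have "up_closed n dir X \<longleftrightarrow> (\<forall>w\<in>X. \<forall>\<alpha> \<beta>. is_path n dir \<alpha> \<and> is_path n dir \<beta> \<and>
      composable n dir \<alpha> w \<and> composable n dir w \<beta> \<longrightarrow> pconcat (pconcat \<alpha> w) \<beta> \<in> X)" for X
    unfolding up_closed_def le_J_def by (intro iffI ballI allI impI; blast)
  then show ?thesis
    unfolding lin_semigroup_ideal_def span_of_def by simp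
qed

lemma span_of_is_ideal:
  assumes paths: "Y \<subseteq> {p. is_path n dir p}" and up: "up_closed n dir Y"
  shows "is_ideal n dir (span_of n dir Y :: (qpath \<Rightarrow> 'k::field) set)"
proof -
  have closed: "is_path n dir r \<and> r \<in> Y"
    if "(p, q) \<in> factorizations n dir r" "p \<in> Y \<or> q \<in> Y" for p q r
    using that up le_J_prepend le_J_append is_path_pconcat
    unfolding factorizations_def up_closed_def by blast
  have mult: "pmult n dir a f \<in> span_of n dir Y \<and> pmult n dir f a \<in> span_of n dir Y"
    if f: "f \<in> span_of n dir Y" for a f :: "qpath \<Rightarrow> 'k"
  proof -
    have "is_path n dir r \<and> r \<in> Y" if "pmult n dir a f r \<noteq> 0" for r
      using that by (rule pmult_nonzero) (metis closed span_ofD[OF f])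
    moreover have "is_path n dir r \<and> r \<in> Y" if "pmult n dir f a r \<noteq> 0" for r
      using that by (rule pmult_nonzero) (metis closed span_ofD[OF f])
    ultimately show ?thesis
      by (simp add: span_of_def pathalg_def)
  qed
  have add: "(\<lambda>r. f r + g r) \<in> span_of n dir Y"
    if "f \<in> span_of n dir Y" "g \<in> span_of n dir Y" for f g :: "qpath \<Rightarrow> 'k"
    using that unfolding span_of_def pathalg_def
    by (auto, metis add.right_neutral)+
  have smult: "(\<lambda>r. c * f r) \<in> span_of n dir Y" if "f \<in> span_of n dir Y" for f :: "qpath \<Rightarrow> 'k" and c
    using that by (auto simp: span_of_def pathalg_def)
  have "span_of n dir Y \<subseteq> pathalg n dir" "(\<lambda>_. 0) \<in> span_of n dir Y"
    by (auto simp: span_of_def pathalg_def)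
  with add smult mult show ?thesis
    unfolding is_ideal_def by blast
qed

lemma path_elem_in_span_of_iff:
  "is_path n dir w \<Longrightarrow> path_elem w \<in> (span_of n dir Y :: (qpath \<Rightarrow> 'k::field) set) \<longleftrightarrow> w \<in> Y"
proof
  show "w \<in> Y" if "path_elem w \<in> (span_of n dir Y :: (qpath \<Rightarrow> 'k) set)"
  proof -
    have "path_elem w w \<noteq> (0::'k) \<longrightarrow> w \<in> Y"
      using that unfolding span_of_def by blast
    then show ?thesis
      by (simp add: path_elem_def)
  qed
  show "path_elem w \<in> (span_of n dir Y :: (qpath \<Rightarrow> 'k) set)" if "is_path n dir w" "w \<in> Y"
    using that by (simp add: span_of_def pathalg_def path_elem_def)
qed

lemma gamma_vertices_span_of:
  "w \<in> gamma_vertices n dir (span_of n dir X :: (qpath \<Rightarrow> 'k::field) set) \<longleftrightarrow>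
    maximal_path n dir w \<and> w \<in> X"
  unfolding gamma_vertices_def maximal_path_def using path_elem_in_span_of_iff by blast

lemma gamma_vertex_is_path: "v \<in> gamma_vertices n dir I \<Longrightarrow> is_path n dir v"
  by (simp add: gamma_vertices_def maximal_path_def)

lemma gamma_edges_span_of:
  "x \<in> gamma_edges n dir (span_of n dir X :: (qpath \<Rightarrow> 'k::field) set) \<longleftrightarrow>
    (is_source n dir x \<or> is_sink n dir x) \<and> (x, []) \<in> X"
  unfolding gamma_edges_def
  using path_elem_in_span_of_iff[OF is_path_trivial, of x n dir X]
  by (auto simp: is_source_def is_sink_def)

lemma exists_gamma_vertex_above:
  fixes I :: "(qpath \<Rightarrow> 'k::field) set"
  assumes adm: "admissible n dir" and paths: "X \<subseteq> {p. is_path n dir p}"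
    and up: "up_closed n dir X" and I: "I = span_of n dir X" and p: "p \<in> X"
  obtains v where "v \<in> gamma_vertices n dir I" "le_J n dir p v"
proof -
  obtain v where "maximal_path n dir v" "le_J n dir p v"
    using exists_maximal_above[OF adm] p paths by blast
  moreover from this have "v \<in> X"
    using up_closedD[OF up p] by blast
  ultimately show ?thesis
    using that I gamma_vertices_span_of by blast
qed

lemma gamma_adj_of_common_lower_bound:
  fixes I :: "(qpath \<Rightarrow> 'k::field) set"
  assumes adm: "admissible n dir" and I: "I = span_of n dir X" and p: "p \<in> X"
    and v1: "v1 \<in> gamma_vertices n dir I" and v2: "v2 \<in> gamma_vertices n dir I"
    and le1: "le_J n dir p v1" and le2: "le_J n dir p v2" and neq: "v1 \<noteq> v2"
  shows "(v1, v2) \<in> gamma_adj n dir I"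
proof -
  have "maximal_path n dir v1" "maximal_path n dir v2"
    using v1 v2 I gamma_vertices_span_of by blast+
  from maximal_paths_above_distinct[OF adm this le1 le2 neq]
  have "p = (fst p, [])" "is_source n dir (fst p) \<or> is_sink n dir (fst p)"
    "is_endpoint n dir (fst p) v1" "is_endpoint n dir (fst p) v2"
    by (simp_all add: prod_eq_iff)
  moreover from this have "fst p \<in> gamma_edges n dir I"
    using p I gamma_edges_span_of by metis
  ultimately show ?thesis
    using v1 v2 unfolding gamma_adj_def by blast
qed

section \<open>A disconnected \<open>\<Gamma>\<^sub>I\<close> splits I\<close>

lemma path_elem_nonzero: "path_elem w \<noteq> (\<lambda>_. 0 :: 'k::field)"
  by (metis path_elem_def one_neq_zero)

lemma span_of_nonzero:
  "is_path n dir p \<Longrightarrow> p \<in> Y \<Longrightarrow> (span_of n dir Y :: (qpath \<Rightarrow> 'k::field) set) \<noteq> {\<lambda>_. 0}"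
  using path_elem_in_span_of_iff[of n dir p Y] path_elem_nonzero by fastforce

lemma decomposable_span_of_Un:
  assumes paths: "Y \<subseteq> {p. is_path n dir p}" "Z \<subseteq> {p. is_path n dir p}"
    and up: "up_closed n dir Y" "up_closed n dir Z"
    and disj: "Y \<inter> Z = {}" and nonempty: "Y \<noteq> {}" "Z \<noteq> {}"
  shows "decomposable_ideal n dir (span_of n dir (Y \<union> Z) :: (qpath \<Rightarrow> 'k::field) set)"
proof -
  let ?J = "span_of n dir Y :: (qpath \<Rightarrow> 'k) set" and ?K = "span_of n dir Z :: (qpath \<Rightarrow> 'k) set"
  have "?J \<noteq> {\<lambda>_. 0}" "?K \<noteq> {\<lambda>_. 0}"
    using nonempty paths span_of_nonzero by blast+
  moreover have "?J \<inter> ?K = {\<lambda>_. 0}"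
  proof (intro equalityI subsetI)
    fix f assume "f \<in> ?J \<inter> ?K"
    then have "f r = 0" for r
      using disj span_ofD by blast
    then show "f \<in> {\<lambda>_. 0}"
      by auto
  qed (simp add: span_of_def pathalg_def)
  moreover have "span_of n dir (Y \<union> Z) = {(\<lambda>r. j r + k r) | j k. j \<in> ?J \<and> k \<in> ?K}"
  proof (intro equalityI subsetI)
    fix f :: "qpath \<Rightarrow> 'k" assume f: "f \<in> span_of n dir (Y \<union> Z)"
    define j where "j r = (if r \<in> Y then f r else 0)" for r
    define k where "k r = (if r \<in> Y then 0 else f r)" for r
    have "j \<in> ?J" "k \<in> ?K"
      using f by (auto simp: span_of_def pathalg_def j_def k_def)
    moreover have "f = (\<lambda>r. j r + k r)"
      by (auto simp: j_def k_def)
    ultimately show "f \<in> {(\<lambda>r. j r + k r) | j k. j \<in> ?J \<and> k \<in> ?K}"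
      by blast
  next
    fix f :: "qpath \<Rightarrow> 'k" assume "f \<in> {(\<lambda>r. j r + k r) | j k. j \<in> ?J \<and> k \<in> ?K}"
    then obtain j k where "j \<in> ?J" "k \<in> ?K" "f = (\<lambda>r. j r + k r)"
      by blast
    then show "f \<in> span_of n dir (Y \<union> Z)"
      unfolding span_of_def pathalg_def by (auto, metis add.right_neutral)+
  qed
  moreover have "is_ideal n dir ?J" "is_ideal n dir ?K"
    by (rule span_of_is_ideal[OF paths(1) up(1)], rule span_of_is_ideal[OF paths(2) up(2)])
  ultimately show ?thesis
    unfolding decomposable_ideal_def by blast
qed

lemma gamma_adj_vertices:
  "(v, u) \<in> gamma_adj n dir I \<Longrightarrow> v \<in> gamma_vertices n dir I \<and> u \<in> gamma_vertices n dir I"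
  unfolding gamma_adj_def by blast

lemma gamma_adj_sym: "(v, u) \<in> gamma_adj n dir I \<Longrightarrow> (u, v) \<in> gamma_adj n dir I"
  unfolding gamma_adj_def by blast

text \<open>The hypothesis on C says that it is a union of connected components of \<open>\<Gamma>\<^sub>I\<close>.
  A vertex above u lies above p as well, so it equals v or is adjacent to it.\<close>
lemma up_closed_below_component:
  fixes I :: "(qpath \<Rightarrow> 'k::field) set"
  assumes adm: "admissible n dir" and paths: "X \<subseteq> {p. is_path n dir p}"
    and up: "up_closed n dir X" and I: "I = span_of n dir X"
    and C: "C \<subseteq> gamma_vertices n dir I"
    and closed: "\<And>v v'. v \<in> C \<Longrightarrow> (v, v') \<in> gamma_adj n dir I \<Longrightarrow> v' \<in> C"
  shows "up_closed n dir {p \<in> X. \<exists>v\<in>C. le_J n dir p v}"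
  unfolding up_closed_def
proof (intro ballI allI impI)
  fix p u assume "p \<in> {p \<in> X. \<exists>v\<in>C. le_J n dir p v}" and pu: "le_J n dir p u"
  then obtain v where p: "p \<in> X" and v: "v \<in> C" "le_J n dir p v"
    by blast
  have u: "u \<in> X"
    using up_closedD[OF up p pu] .
  then obtain v' where v': "v' \<in> gamma_vertices n dir I" "le_J n dir u v'"
    using exists_gamma_vertex_above[OF adm paths up I] by blast
  have "v' \<in> C"
  proof (cases "v = v'")
    case False
    then have "(v, v') \<in> gamma_adj n dir I"
      using gamma_adj_of_common_lower_bound[OF adm I p] v v' C pu le_J_trans by blast
    then show ?thesis
      using closed v(1) by blast
  qed (use v in simp)
  with u v' show "u \<in> {p \<in> X. \<exists>v\<in>C. le_J n dir p v}"
    by blast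
qed

lemma gamma_vertices_nonempty:
  fixes I :: "(qpath \<Rightarrow> 'k::field) set"
  assumes adm: "admissible n dir" and paths: "X \<subseteq> {p. is_path n dir p}"
    and up: "up_closed n dir X" and I: "I = span_of n dir X" and nonzero: "I \<noteq> {\<lambda>_. 0}"
  shows "gamma_vertices n dir I \<noteq> {}"
proof -
  have "(\<lambda>_. 0) \<in> I"
    using I by (simp add: span_of_def pathalg_def)
  with nonzero obtain f where "f \<in> I" "f \<noteq> (\<lambda>_. 0)"
    by blast
  moreover from this obtain p where "f p \<noteq> 0"
    by (metis ext)
  ultimately have "p \<in> X"
    using I span_ofD by blast
  then show ?thesis
    using exists_gamma_vertex_above[OF adm paths up I] by blast
qed

lemma decomposable_if_union_of_components:
  fixes I :: "(qpath \<Rightarrow> 'k::field) set"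
  assumes adm: "admissible n dir" and paths: "X \<subseteq> {p. is_path n dir p}"
    and up: "up_closed n dir X" and I: "I = span_of n dir X"
    and C: "C \<subseteq> gamma_vertices n dir I"
    and C_closed: "\<And>v v'. v \<in> C \<Longrightarrow> (v, v') \<in> gamma_adj n dir I \<Longrightarrow> v' \<in> C"
    and w: "w \<in> C" and u: "u \<in> gamma_vertices n dir I - C"
  shows "decomposable_ideal n dir I"
proof -
  let ?V = "gamma_vertices n dir I"
  define Y where "Y = {p \<in> X. \<exists>v\<in>C. le_J n dir p v}"
  define Z where "Z = {p \<in> X. \<exists>v\<in>?V - C. le_J n dir p v}"
  have D_closed: "v' \<in> ?V - C" if "v \<in> ?V - C" "(v, v') \<in> gamma_adj n dir I" for v v'
    using that C_closed[OF _ gamma_adj_sym] gamma_adj_vertices[OF that(2)] by blast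
  have vertex: "v \<in> X \<and> le_J n dir v v" if "v \<in> ?V" for v
    using that I gamma_vertices_span_of le_J_refl[OF gamma_vertex_is_path] by blast
  from up_closed_below_component[OF adm paths up I C C_closed]
  have "up_closed n dir Y"
    unfolding Y_def .
  moreover from up_closed_below_component[OF adm paths up I Diff_subset D_closed]
  have "up_closed n dir Z"
    unfolding Z_def .
  moreover have "Y \<inter> Z = {}"
  proof -
    have False if "p \<in> X" "v \<in> C" "le_J n dir p v" "v' \<in> ?V - C" "le_J n dir p v'" for p v v'
      using that C C_closed gamma_adj_of_common_lower_bound[OF adm I, of p v v'] by blast
    then show ?thesis
      unfolding Y_def Z_def by blast
  qed
  moreover have "X = Y \<union> Z"
    using exists_gamma_vertex_above[OF adm paths up I] unfolding Y_def Z_def by blast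
  moreover have "w \<in> Y" "u \<in> Z"
    using vertex w u C unfolding Y_def Z_def by blast+
  ultimately show ?thesis
    using decomposable_span_of_Un[of Y n dir Z] paths I by blast
qed

lemma decomposable_if_not_connected:
  fixes I :: "(qpath \<Rightarrow> 'k::field) set"
  assumes adm: "admissible n dir" and paths: "X \<subseteq> {p. is_path n dir p}"
    and up: "up_closed n dir X" and I: "I = span_of n dir X"
    and nonzero: "I \<noteq> {\<lambda>_. 0}" and disconnected: "\<not> gamma_connected n dir I"
  shows "decomposable_ideal n dir I"
proof -
  let ?V = "gamma_vertices n dir I" and ?A = "gamma_adj n dir I"
  obtain w u where w: "w \<in> ?V" and u: "u \<in> ?V" and unreachable: "(w, u) \<notin> ?A\<^sup>*"
    using gamma_vertices_nonempty[OF adm paths up I nonzero] disconnected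
    unfolding gamma_connected_def by blast
  define C where "C = {v \<in> ?V. (w, v) \<in> ?A\<^sup>*}"
  have "v' \<in> C" if "v \<in> C" "(v, v') \<in> ?A" for v v'
    using that gamma_adj_vertices[OF that(2)] unfolding C_def by (auto intro: rtrancl_into_rtrancl)
  moreover have "C \<subseteq> ?V" "w \<in> C" "u \<in> ?V - C"
    using w u unreachable unfolding C_def by auto
  ultimately show ?thesis
    using decomposable_if_union_of_components[OF adm paths up I] by blast
qed

section \<open>A connected \<open>\<Gamma>\<^sub>I\<close> makes I indecomposable\<close>

lemma ideal_mult_left: "is_ideal n dir J \<Longrightarrow> f \<in> J \<Longrightarrow> a \<in> pathalg n dir \<Longrightarrow> pmult n dir a f \<in> J"
  and ideal_mult_right: "is_ideal n dir J \<Longrightarrow> f \<in> J \<Longrightarrow> a \<in> pathalg n dir \<Longrightarrow> pmult n dir f a \<in> J"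
  and ideal_smult: "is_ideal n dir J \<Longrightarrow> f \<in> J \<Longrightarrow> (\<lambda>r. c * f r) \<in> J"
  and ideal_pathalg: "is_ideal n dir J \<Longrightarrow> f \<in> J \<Longrightarrow> f \<in> pathalg n dir"
  and ideal_zero: "is_ideal n dir J \<Longrightarrow> (\<lambda>_. 0) \<in> J"
  unfolding is_ideal_def by blast+

lemma path_elem_pathalg: "is_path n dir w \<Longrightarrow> path_elem w \<in> pathalg n dir"
  by (simp add: pathalg_def path_elem_def)

lemma ideal_path_elem_of_multiple:
  assumes "is_ideal n dir J" "(\<lambda>r. c * path_elem w r) \<in> J" "c \<noteq> 0"
  shows "path_elem w \<in> J"
  using ideal_smult[OF assms(1,2), of "inverse c"] assms(3) by (simp add: mult.assoc[symmetric])

lemma direct_sum_summands_subset: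
  assumes "is_ideal n dir J" "is_ideal n dir K" "I = {(\<lambda>r. j r + k r) | j k. j \<in> J \<and> k \<in> K}"
  shows "J \<subseteq> I" "K \<subseteq> I"
  using ideal_zero[OF assms(1)] ideal_zero[OF assms(2)] unfolding assms(3) by force+

text \<open>Since \<open>\<epsilon>\<^sub>x f \<epsilon>\<^sub>x\<close> is a multiple of \<open>\<epsilon>\<^sub>x\<close>, splitting \<open>\<epsilon>\<^sub>x = j + k\<close> puts
  \<open>\<epsilon>\<^sub>x\<close> into whichever summand has a non-zero coefficient at \<open>\<epsilon>\<^sub>x\<close>.\<close>
lemma gamma_edge_in_summand:
  fixes J K :: "(qpath \<Rightarrow> 'k::field) set"
  assumes adm: "admissible n dir" and J: "is_ideal n dir J" and K: "is_ideal n dir K"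
    and sum: "I = {(\<lambda>r. j r + k r) | j k. j \<in> J \<and> k \<in> K}" and x: "x \<in> gamma_edges n dir I"
  shows "path_elem (x, []) \<in> J \<or> path_elem (x, []) \<in> K"
proof -
  obtain j k where jk: "path_elem (x, []) = (\<lambda>r. j r + k r)" "j \<in> J" "k \<in> K"
    using x sum unfolding gamma_edges_def by blast
  have "x < n"
    using x by (auto simp: gamma_edges_def is_source_def is_sink_def)
  then have e: "path_elem (x, []) \<in> pathalg n dir"
    using path_elem_pathalg is_path_trivial by blast
  have corner: "(\<lambda>r. f (x, []) * path_elem (x, []) r) \<in> L"
    if "is_ideal n dir L" "f \<in> L" for L and f :: "qpath \<Rightarrow> 'k"
    using pmult_corner_trivial[OF adm \<open>x < n\<close>, of f]
      ideal_mult_right[OF that(1) ideal_mult_left[OF that e] e] by simp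
  have "j (x, []) + k (x, []) = 1"
    using fun_cong[OF jk(1), of "(x, [])"] by (simp add: path_elem_def)
  then have "j (x, []) \<noteq> 0 \<or> k (x, []) \<noteq> 0"
    by auto
  then show ?thesis
    using ideal_path_elem_of_multiple[OF J corner[OF J jk(2)]]
      ideal_path_elem_of_multiple[OF K corner[OF K jk(3)]] by blast
qed

lemma path_elem_in_ideal_at_endpoint:
  fixes J :: "(qpath \<Rightarrow> 'k::field) set"
  assumes J: "is_ideal n dir J" and v: "is_path n dir v"
    and y: "is_endpoint n dir y v" and yJ: "path_elem (y, []) \<in> J"
  shows "path_elem v \<in> J"
  using y unfolding is_endpoint_def path_start_def
proof
  assume "y = fst v"
  then show ?thesis
    using path_elem_trivial_mult_left[OF v, where 'k='k]
      ideal_mult_right[OF J yJ path_elem_pathalg[OF v]] by simp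
next
  assume "y = path_end n dir v"
  then show ?thesis
    using path_elem_trivial_mult_right[OF v, where 'k='k]
      ideal_mult_left[OF J yJ path_elem_pathalg[OF v]] by simp
qed

text \<open>A coefficient \<open>k p \<noteq> 0\<close> with \<open>v = \<alpha> p \<beta>\<close> survives in \<open>\<epsilon>\<^sub>y \<alpha> k\<close> or \<open>k \<beta> \<epsilon>\<^sub>y\<close>.\<close>
lemma ideals_meet_at_endpoint:
  fixes J K :: "(qpath \<Rightarrow> 'k::field) set"
  assumes J: "is_ideal n dir J" and K: "is_ideal n dir K"
    and y: "is_endpoint n dir y v" "path_elem (y, []) \<in> J"
    and k: "k \<in> K" "k p \<noteq> 0" and p: "is_path n dir p" and le: "le_J n dir p v"
  shows "\<exists>h \<in> J \<inter> K. h \<noteq> (\<lambda>_. 0)"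
proof -
  obtain a b where ab: "is_path n dir a" "is_path n dir b" "composable n dir a p"
    "composable n dir p b" "v = pconcat (pconcat a p) b"
    using le unfolding le_J_def by blast
  have ey: "(path_elem (y, []) :: qpath \<Rightarrow> 'k) \<in> pathalg n dir"
    using ideal_pathalg[OF J y(2)] .
  have ends: "fst v = fst a" "path_end n dir v = path_end n dir b"
    using ab(3-5) by (simp_all add: path_end_pconcat composable_pconcat)
  from y(1) show ?thesis
    unfolding is_endpoint_def path_start_def
  proof
    assume "y = fst v"
    let ?g = "pmult n dir (path_elem a) k"
    have "?g \<in> K"
      using ideal_mult_left[OF K k(1) path_elem_pathalg[OF ab(1)]] .
    then have "pmult n dir (path_elem (y, [])) ?g \<in> J \<inter> K"
      using ideal_mult_left[OF K _ ey] ideal_mult_right[OF J y(2) ideal_pathalg[OF K]] by blast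
    with pmult_trivial_start_nonzero[OF ab(1) p ab(3), of k, OF k(2)] show ?thesis
      using \<open>y = fst v\<close> ends by auto
  next
    assume "y = path_end n dir v"
    let ?g = "pmult n dir k (path_elem b)"
    have "?g \<in> K"
      using ideal_mult_right[OF K k(1) path_elem_pathalg[OF ab(2)]] .
    then have "pmult n dir ?g (path_elem (y, [])) \<in> J \<inter> K"
      using ideal_mult_right[OF K _ ey] ideal_mult_left[OF J y(2) ideal_pathalg[OF K]] by blast
    with pmult_trivial_end_nonzero[OF p ab(2) ab(4), of k, OF k(2)] show ?thesis
      using \<open>y = path_end n dir v\<close> ends by auto
  qed
qed

lemma complement_zero_if_vertices_touch:
  fixes J K :: "(qpath \<Rightarrow> 'k::field) set"
  assumes adm: "admissible n dir" and paths: "X \<subseteq> {p. is_path n dir p}"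
    and up: "up_closed n dir X" and I: "I = span_of n dir X"
    and J: "is_ideal n dir J" and K: "is_ideal n dir K" and JK: "J \<inter> K = {\<lambda>_. 0}" and KI: "K \<subseteq> I"
    and touch: "\<And>v. v \<in> gamma_vertices n dir I \<Longrightarrow>
      \<exists>y. is_endpoint n dir y v \<and> path_elem (y, []) \<in> J"
  shows "K = {\<lambda>_. 0}"
proof (rule ccontr)
  assume "K \<noteq> {\<lambda>_. 0}"
  then obtain k where k: "k \<in> K" "k \<noteq> (\<lambda>_. 0)"
    using ideal_zero[OF K] by blast
  then obtain p where kp: "k p \<noteq> 0"
    by (metis ext)
  have p: "p \<in> X"
    using k(1) KI I kp span_ofD by blast
  then obtain v where v: "v \<in> gamma_vertices n dir I" "le_J n dir p v"
    using exists_gamma_vertex_above[OF adm paths up I] by blast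
  obtain y where "is_endpoint n dir y v" "path_elem (y, []) \<in> J"
    using touch[OF v(1)] by blast
  then show False
    using ideals_meet_at_endpoint[OF J K _ _ k(1) kp _ v(2)] p paths JK by blast
qed

lemma le_J_sole_gamma_vertex:
  fixes I :: "(qpath \<Rightarrow> 'k::field) set"
  assumes adm: "admissible n dir" and paths: "X \<subseteq> {p. is_path n dir p}"
    and up: "up_closed n dir X" and I: "I = span_of n dir X"
    and sole: "gamma_vertices n dir I = {w}" and q: "q \<in> X"
  shows "le_J n dir q w"
proof -
  obtain v where "v \<in> gamma_vertices n dir I" "le_J n dir q v"
    by (rule exists_gamma_vertex_above[OF adm paths up I q])
  with sole show ?thesis
    by simp
qed

text \<open>Every path of I lies below w, so for \<open>j p \<noteq> 0\<close> and \<open>w = \<alpha> p \<beta>\<close> the element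
  \<open>\<alpha> j \<beta>\<close> is supported on paths below w with the ends of w, that is, on w alone.\<close>
lemma sole_vertex_in_ideal:
  fixes J :: "(qpath \<Rightarrow> 'k::field) set"
  assumes adm: "admissible n dir" and paths: "X \<subseteq> {p. is_path n dir p}"
    and up: "up_closed n dir X" and I: "I = span_of n dir X"
    and J: "is_ideal n dir J" and JI: "J \<subseteq> I" and nonzero: "J \<noteq> {\<lambda>_. 0}"
    and sole: "gamma_vertices n dir I = {w}"
  shows "path_elem w \<in> J"
proof -
  note below_w = le_J_sole_gamma_vertex[OF adm paths up I sole]
  obtain j where j: "j \<in> J" "j \<noteq> (\<lambda>_. 0)"
    using nonzero ideal_zero[OF J] by blast
  then obtain p where jp: "j p \<noteq> 0"
    by (metis ext)
  have "p \<in> X"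
    using j(1) JI I jp span_ofD by blast
  then obtain a b where ab: "is_path n dir a" "is_path n dir b" "composable n dir a p"
    "composable n dir p b" "w = pconcat (pconcat a p) b"
    using below_w unfolding le_J_def by blast
  have p: "is_path n dir p"
    using paths \<open>p \<in> X\<close> by blast
  let ?g = "pmult n dir (pmult n dir (path_elem a) j) (path_elem b)"
  have gJ: "?g \<in> J"
    using ideal_mult_right[OF J ideal_mult_left[OF J j(1) path_elem_pathalg[OF ab(1)]]
        path_elem_pathalg[OF ab(2)]] .
  have at_w: "?g w = j p"
    using pmult_path_elem_right[OF is_path_pconcat[OF ab(1) p ab(3)] ab(2)
        composable_pconcat[OF ab(3,4)], of "pmult n dir (path_elem a) j"]
      pmult_path_elem_left[OF ab(1) p ab(3), of j] ab(5) by simp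
  have elsewhere: "r = w" if gr: "?g r \<noteq> 0" for r
  proof -
    have "fst r = fst w" "path_end n dir r = path_end n dir w"
      using pmult_path_elem_sandwich_nonzero[OF gr] ab(3-5)
      by (simp_all add: path_end_pconcat composable_pconcat)
    moreover have "r \<in> X"
      using gr gJ JI I span_ofD by blast
    ultimately show "r = w"
      using le_J_same_ends[OF adm below_w] by blast
  qed
  have "?g = (\<lambda>r. j p * path_elem w r)"
  proof
    fix r
    show "?g r = j p * path_elem w r"
      using at_w elsewhere[of r] by (cases "r = w") (auto simp: path_elem_def)
  qed
  then show ?thesis
    using ideal_path_elem_of_multiple[OF J _ jp] gJ by simp
qed

lemma endpoint_in_summand:
  fixes J K :: "(qpath \<Rightarrow> 'k::field) set"
  assumes K: "is_ideal n dir K" and JK: "J \<inter> K = {\<lambda>_. 0}"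
    and u: "is_path n dir u" "path_elem u \<in> J" and y: "is_endpoint n dir y u"
    and split: "path_elem (y, []) \<in> J \<or> path_elem (y, []) \<in> K"
  shows "path_elem (y, []) \<in> J"
proof (rule ccontr)
  assume "path_elem (y, []) \<notin> J"
  then have "path_elem u \<in> K"
    using split path_elem_in_ideal_at_endpoint[OF K u(1) y] by blast
  then show False
    using u(2) JK path_elem_nonzero by blast
qed

lemma vertices_touch_summand:
  fixes J K :: "(qpath \<Rightarrow> 'k::field) set"
  assumes J: "is_ideal n dir J" and K: "is_ideal n dir K" and JK: "J \<inter> K = {\<lambda>_. 0}"
    and edges: "\<And>y. y \<in> gamma_edges n dir I \<Longrightarrow> path_elem (y, []) \<in> J \<or> path_elem (y, []) \<in> K"
    and connected: "gamma_connected n dir I" and w0: "w0 \<in> gamma_vertices n dir I"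
    and x: "is_endpoint n dir x w0" "path_elem (x, []) \<in> J"
    and v: "v \<in> gamma_vertices n dir I"
  shows "\<exists>y. is_endpoint n dir y v \<and> path_elem (y, []) \<in> J"
proof -
  let ?A = "gamma_adj n dir I"
  have reachable_in_J: "path_elem u \<in> J" if "(w0, u) \<in> ?A\<^sup>*" for u
    using that
  proof (induction rule: rtrancl_induct)
    case base
    show ?case
      using path_elem_in_ideal_at_endpoint[OF J gamma_vertex_is_path[OF w0] x] .
  next
    case (step u u')
    then obtain y where u: "u \<in> gamma_vertices n dir I" and u': "u' \<in> gamma_vertices n dir I"
      and y: "y \<in> gamma_edges n dir I" "is_endpoint n dir y u" "is_endpoint n dir y u'"
      unfolding gamma_adj_def by blast
    have "path_elem (y, []) \<in> J"
      using endpoint_in_summand[OF K JK gamma_vertex_is_path[OF u] step.IH y(2) edges[OF y(1)]] .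
    then show ?case
      using path_elem_in_ideal_at_endpoint[OF J gamma_vertex_is_path[OF u'] y(3)] by blast
  qed
  show ?thesis
  proof (cases "v = w0")
    case False
    have "(w0, v) \<in> ?A\<^sup>*"
      using connected w0 v unfolding gamma_connected_def by blast
    then obtain u where "(u, v) \<in> ?A"
      using False by (metis rtranclE)
    then obtain y where "y \<in> gamma_edges n dir I" "is_endpoint n dir y v"
      unfolding gamma_adj_def by blast
    then show ?thesis
      using endpoint_in_summand[OF K JK gamma_vertex_is_path[OF v] reachable_in_J]
        edges \<open>(w0, v) \<in> ?A\<^sup>*\<close> by blast
  qed (use x in blast)
qed

lemma gamma_connected_without_adj:
  assumes "gamma_connected n dir I" "gamma_adj n dir I = {}"
  obtains w where "gamma_vertices n dir I = {w}"
  using assms unfolding gamma_connected_def by (metis ex_in_conv insertI1 rtrancl_empty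
    pair_in_Id_conv subset_singleton_iff subsetI)

lemma not_decomposable_if_connected:
  fixes I :: "(qpath \<Rightarrow> 'k::field) set"
  assumes adm: "admissible n dir" and paths: "X \<subseteq> {p. is_path n dir p}"
    and up: "up_closed n dir X" and I: "I = span_of n dir X"
    and connected: "gamma_connected n dir I"
  shows "\<not> decomposable_ideal n dir I"
proof
  assume "decomposable_ideal n dir I"
  then obtain J K where J: "is_ideal n dir J" and K: "is_ideal n dir K"
    and nonzero: "J \<noteq> {\<lambda>_. 0}" "K \<noteq> {\<lambda>_. 0}" and JK: "J \<inter> K = {\<lambda>_. 0}"
    and sum: "I = {(\<lambda>r. j r + k r) | j k. j \<in> J \<and> k \<in> K}"
    unfolding decomposable_ideal_def by blast
  note summands = direct_sum_summands_subset[OF J K sum]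
  note edges = gamma_edge_in_summand[OF adm J K sum]
  have edges': "path_elem (y, []) \<in> K \<or> path_elem (y, []) \<in> J" if "y \<in> gamma_edges n dir I" for y
    using edges[OF that] by blast
  have KJ: "K \<inter> J = {\<lambda>_. 0}"
    using JK by blast
  show False
  proof (cases "gamma_adj n dir I = {}")
    case False
    then obtain w x where wx: "w \<in> gamma_vertices n dir I" "x \<in> gamma_edges n dir I"
      "is_endpoint n dir x w"
      unfolding gamma_adj_def by blast
    from edges[OF wx(2)] show False
    proof
      assume "path_elem (x, []) \<in> J"
      then show False
        using complement_zero_if_vertices_touch[OF adm paths up I J K JK summands(2)]
          vertices_touch_summand[OF J K JK edges connected wx(1,3)] nonzero(2) by blast
    next
      assume "path_elem (x, []) \<in> K"
      then show False
        using complement_zero_if_vertices_touch[OF adm paths up I K J KJ summands(1)]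
          vertices_touch_summand[OF K J KJ edges' connected wx(1,3)] nonzero(1) by blast
    qed
  next
    case True
    obtain w where "gamma_vertices n dir I = {w}"
      using connected True by (rule gamma_connected_without_adj)
    then have "path_elem w \<in> J \<inter> K"
      using sole_vertex_in_ideal[OF adm paths up I J summands(1) nonzero(1)]
        sole_vertex_in_ideal[OF adm paths up I K summands(2) nonzero(2)] by blast
    then show False
      using JK path_elem_nonzero by blast
  qed
qed

theorem theorem9:
  fixes n :: nat and dir :: "nat \<Rightarrow> bool" and I :: "(qpath \<Rightarrow> 'k::alg_closed_field) set"
  assumes "admissible n dir"
    and "lin_semigroup_ideal n dir I"
    and "I \<noteq> {\<lambda>_. 0}"
  shows "indecomposable_ideal n dir I \<longleftrightarrow> gamma_connected n dir I"
proof -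
  obtain X where X: "X \<subseteq> {p. is_path n dir p}" "up_closed n dir X" "I = span_of n dir X"
    using assms(2) unfolding lin_semigroup_ideal_iff by blast
  show ?thesis
    unfolding indecomposable_ideal_def
    using decomposable_if_not_connected[OF assms(1) X assms(3)]
      not_decomposable_if_connected[OF assms(1) X] assms(3) by blast
qed

end
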